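(* Consider a set of market participants (at least two) and a sequence of market data points $x = 1,2,3,\dots$. For each participant $i$ and data point $x$, let $D(i,x)\in\mathbb{R}$ be the real time at which $x$ is delivered to participant $i$, with $D(i,x) < D(i,x+1)$. Suppose an ordering system achieves response time fairness when trigger points are unknown, in the following sense: the ordering system receives the delivery times $D$ and the submission times $S(i,a)$ of all trades (but not their trigger points), and outputs a strict order $O$ on the trades; and for every finite collection of trades with any submission times and for every assignment of trigger points $TP(i,a)$ to these trades satisfying $D(i,TP(i,a)) \le S(i,a)$, the output order satisfies: whenever $TP(i,a) = TP(j,b) = x$ and $S(i,a) - D(i,x) < S(j,b) - D(j,x)$, then $O(i,a) < O(j,b)$. Then necessarily $$D(i,y) - D(i,x) = D(j,y) - D(j,x) \quad \text{for all participants } i,j \text{ and all data points } x,y.$$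
   Context: A trade $(i,a)$ denotes the $a$-th trade submitted by participant $i$; $S(i,a)$ is the real time at which it is submitted. The trigger point $TP(i,a)$ is the market data point in response to which the trade was generated, and the response time is $RT(i,a) = S(i,a) - D(i,TP(i,a))$. Response time fairness (for trades in the same speed race) requires: if $TP(i,a)=TP(j,b)$ and $RT(i,a) < RT(j,b)$ then $O(i,a) < O(j,b)$, where $O(i,a)<O(j,b)$ means trade $(i,a)$ is forwarded to the exchange's matching engine before $(j,b)$. "Trigger points unknown" means the ordering can depend only on the delivery times and submission times, so it must satisfy the fairness condition simultaneously for every possible assignment of trigger points consistent with these times. *)

theory Defs
  imports Main "HOL.Real"
begin

text \<open>Trades are pairs (i, a): the a-th trade of participant i.
  Data points are natural numbers x \<ge> 1.
  An ordering system (for the fixed delivery times D) maps a finite set of trades T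
  together with their submission times S to a relation Ord T S on trades
  (Ord T S t u means t is forwarded before u).\<close>

definition strict_order_on :: "'a set \<Rightarrow> ('a \<Rightarrow> 'a \<Rightarrow> bool) \<Rightarrow> bool" where
  "strict_order_on T R \<longleftrightarrow>
     (\<forall>t\<in>T. \<not> R t t) \<and> (\<forall>t\<in>T. \<forall>u\<in>T. \<forall>v\<in>T. R t u \<and> R u v \<longrightarrow> R t v)"

definition rt_fair_unknown_TP ::
  "('p \<Rightarrow> nat \<Rightarrow> real) \<Rightarrow>
   (('p \<times> nat) set \<Rightarrow> ('p \<times> nat \<Rightarrow> real) \<Rightarrow> 'p \<times> nat \<Rightarrow> 'p \<times> nat \<Rightarrow> bool) \<Rightarrow> bool" where
  "rt_fair_unknown_TP D Ord \<longleftrightarrow>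
     (\<forall>T S. finite T \<longrightarrow>
        strict_order_on T (Ord T S) \<and>
        (\<forall>TP. (\<forall>t\<in>T. 1 \<le> TP t \<and> D (fst t) (TP t) \<le> S t) \<longrightarrow>
           (\<forall>t\<in>T. \<forall>u\<in>T. TP t = TP u \<and>
               S t - D (fst t) (TP t) < S u - D (fst u) (TP u) \<longrightarrow> Ord T S t u)))"

end

theory Submission
  imports Defs
begin

text \<open>Take one trade of participant i and one of participant j, and space their submission
  times so that the response time of i's trade is the smaller one if both were triggered by x,
  but the larger one if both were triggered by y; this is possible exactly when
  D i y - D j y < D i x - D j x. Since the ordering cannot see the trigger points, it would
  have to forward each trade before the other. Applying this to (i, j) and to (j, i) forces
  D i y - D j y = D i x - D j x.\<close>

lemma strict_order_on_asym:
  assumes "strict_order_on T R" and "t \<in> T" and "u \<in> T" and "R t u"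
  shows "\<not> R u t"
  using assms unfolding strict_order_on_def by blast

lemma rt_fair_unknown_TP_strict_order:
  assumes "rt_fair_unknown_TP D Ord" and "finite T"
  shows "strict_order_on T (Ord T S)"
  using assms unfolding rt_fair_unknown_TP_def by blast

lemma rt_fair_unknown_TP_common_trigger:
  assumes fair: "rt_fair_unknown_TP D Ord" and "finite T" and "1 \<le> x"
    and delivered: "\<forall>s\<in>T. D (fst s) x \<le> S s"
    and "t \<in> T" and "u \<in> T"
    and faster: "S t - D (fst t) x < S u - D (fst u) x"
  shows "Ord T S t u"
proof -
  have "\<forall>TP. (\<forall>s\<in>T. 1 \<le> TP s \<and> D (fst s) (TP s) \<le> S s) \<longrightarrow>
      (\<forall>t\<in>T. \<forall>u\<in>T. TP t = TP u \<and>
        S t - D (fst t) (TP t) < S u - D (fst u) (TP u) \<longrightarrow> Ord T S t u)"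
    using fair \<open>finite T\<close> unfolding rt_fair_unknown_TP_def by blast
  from spec[OF this, of "\<lambda>_. x"] show ?thesis
    using \<open>1 \<le> x\<close> delivered \<open>t \<in> T\<close> \<open>u \<in> T\<close> faster by simp
qed

lemma rt_fair_unknown_TP_offset_not_decreasing:
  fixes D :: "'p \<Rightarrow> nat \<Rightarrow> real"
  assumes fair: "rt_fair_unknown_TP D Ord" and "i \<noteq> j" and "1 \<le> x" and "1 \<le> y"
  shows "\<not> D i y - D j y < D i x - D j x"
proof
  assume less: "D i y - D j y < D i x - D j x"
  define t where "t = (i, 0::nat)"
  define u where "u = (j, 0::nat)"
  define T where "T = {t, u}"
  \<comment> \<open>c separates the two offsets; M is large enough for both trigger points to be valid.\<close>
  define c where "c = ((D i y - D j y) + (D i x - D j x)) / 2"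
  define M where "M = \<bar>D i x\<bar> + \<bar>D i y\<bar> + \<bar>D j x\<bar> + \<bar>D j y\<bar> + \<bar>c\<bar>"
  define S where "S s = (if s = t then M + c else M)" for s
  have "t \<noteq> u"
    using \<open>i \<noteq> j\<close> by (simp add: t_def u_def)
  then have St: "S t = M + c" and Su: "S u = M"
    by (simp_all add: S_def)
  have fst_t: "fst t = i" and fst_u: "fst u = j"
    by (simp_all add: t_def u_def)
  have "finite T" and "t \<in> T" and "u \<in> T"
    by (simp_all add: T_def)
  have delivered: "\<forall>s\<in>T. D (fst s) z \<le> S s" if "z \<in> {x, y}" for z
  proof -
    have "\<bar>D i z\<bar> + \<bar>D j z\<bar> \<le> \<bar>D i x\<bar> + \<bar>D i y\<bar> + \<bar>D j x\<bar> + \<bar>D j y\<bar>"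
      using that by auto
    then have "D i z \<le> M + c" and "D j z \<le> M"
      unfolding M_def by linarith+
    then show ?thesis
      using St Su fst_t fst_u by (simp add: T_def)
  qed
  have "S t - D (fst t) x < S u - D (fst u) x"
    using less by (simp add: St Su fst_t fst_u c_def field_simps)
  then have "Ord T S t u"
    using rt_fair_unknown_TP_common_trigger[OF fair \<open>finite T\<close> \<open>1 \<le> x\<close> delivered]
      \<open>t \<in> T\<close> \<open>u \<in> T\<close> by simp
  moreover have "S u - D (fst u) y < S t - D (fst t) y"
    using less by (simp add: St Su fst_t fst_u c_def field_simps)
  then have "Ord T S u t"
    using rt_fair_unknown_TP_common_trigger[OF fair \<open>finite T\<close> \<open>1 \<le> y\<close> delivered]
      \<open>t \<in> T\<close> \<open>u \<in> T\<close> by simp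
  ultimately show False
    using strict_order_on_asym[OF rt_fair_unknown_TP_strict_order[OF fair \<open>finite T\<close>]]
      \<open>t \<in> T\<close> \<open>u \<in> T\<close>
    by blast
qed

theorem lemma1:
  fixes D :: "'p \<Rightarrow> nat \<Rightarrow> real"
    and Ord :: "('p \<times> nat) set \<Rightarrow> ('p \<times> nat \<Rightarrow> real) \<Rightarrow> 'p \<times> nat \<Rightarrow> 'p \<times> nat \<Rightarrow> bool"
  assumes "\<exists>i j :: 'p. i \<noteq> j"
    and "\<forall>i x. 1 \<le> x \<longrightarrow> D i x < D i (Suc x)"
    and "rt_fair_unknown_TP D Ord"
  shows "\<forall>i j x y. 1 \<le> x \<longrightarrow> 1 \<le> y \<longrightarrow> D i y - D i x = D j y - D j x"
proof (intro allI impI)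
  fix i j :: 'p and x y :: nat
  assume "1 \<le> x" and "1 \<le> y"
  show "D i y - D i x = D j y - D j x"
  proof (cases "i = j")
    case False
    have "\<not> D i y - D j y < D i x - D j x"
      using rt_fair_unknown_TP_offset_not_decreasing[OF assms(3) False \<open>1 \<le> x\<close> \<open>1 \<le> y\<close>] .
    moreover have "\<not> D j y - D i y < D j x - D i x"
      using rt_fair_unknown_TP_offset_not_decreasing[OF assms(3) not_sym[OF False] \<open>1 \<le> x\<close> \<open>1 \<le> y\<close>] .
    ultimately show ?thesis
      by linarith
  qed simp
qed

end
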